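(* Let $\beta>1$, $l\in(-1,0]$, $r=l+1$, and let $d$ be the $(-\beta,l)$-expansion. If every rational number $x\in[l,r)$ has eventually periodic $(-\beta,l)$-expansion $d(x)$, then $\beta$ is either a Pisot number or a Salem number.
   Context: For $\beta>1$ and $l\in(-1,0]$, $r=l+1$, the $(-\beta,l)$-transformation is $T:[l,r)\to[l,r)$, $T(x)=-\beta x-\lfloor -\beta x-l\rfloor$. The $(-\beta,l)$-expansion of $x\in[l,r)$ is the integer sequence $d(x)=x_1x_2x_3\cdots$ with $x_i=\lfloor -\beta T^{i-1}(x)-l\rfloor$. A Pisot number is a real algebraic integer $>1$ all of whose other conjugates have modulus $<1$; a Salem number is a real algebraic integer $>1$ all of whose other conjugates have modulus $\le1$, with at least one conjugate of modulus exactly $1$. *)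

theory Defs
  imports "HOL-Analysis.Analysis" "HOL-Computational_Algebra.Computational_Algebra"
begin

definition negbeta_T :: "real \<Rightarrow> real \<Rightarrow> real \<Rightarrow> real" where
  "negbeta_T \<beta> l x = - \<beta> * x - of_int \<lfloor>- \<beta> * x - l\<rfloor>"

text \<open>Digit sequence of the (-beta,l)-expansion; index n (from 0) is the digit x_(n+1).\<close>
definition negbeta_digits :: "real \<Rightarrow> real \<Rightarrow> real \<Rightarrow> nat \<Rightarrow> int" where
  "negbeta_digits \<beta> l x n = \<lfloor>- \<beta> * ((negbeta_T \<beta> l ^^ n) x) - l\<rfloor>"

definition eventually_periodic :: "(nat \<Rightarrow> 'a) \<Rightarrow> bool" where
  "eventually_periodic s \<longleftrightarrow> (\<exists>N p. p > 0 \<and> (\<forall>n\<ge>N. s (n + p) = s n))"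

definition conjugates :: "real \<Rightarrow> complex set" where
  "conjugates \<beta> = {z. \<exists>p :: int poly. lead_coeff p = 1 \<and> irreducible p \<and>
      poly (map_poly of_int p) (complex_of_real \<beta>) = 0 \<and> poly (map_poly of_int p) z = 0}"

definition pisot :: "real \<Rightarrow> bool" where
  "pisot \<beta> \<longleftrightarrow> algebraic_int \<beta> \<and> \<beta> > 1 \<and>
     (\<forall>z \<in> conjugates \<beta> - {complex_of_real \<beta>}. cmod z < 1)"

definition salem :: "real \<Rightarrow> bool" where
  "salem \<beta> \<longleftrightarrow> algebraic_int \<beta> \<and> \<beta> > 1 \<and>
     (\<forall>z \<in> conjugates \<beta> - {complex_of_real \<beta>}. cmod z \<le> 1) \<and>
     (\<exists>z \<in> conjugates \<beta> - {complex_of_real \<beta>}. cmod z = 1)"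

end

theory Submission
  imports Defs
begin

text \<open>Suppose a conjugate \<open>\<gamma> \<noteq> \<beta>\<close> had \<open>|\<gamma>| > 1\<close>. For rational \<open>x = a/b\<close> the point
  \<open>T\<^sup>n x\<close> is \<open>1/b\<close> times an integer polynomial in \<open>\<beta>\<close> built from the digits, so
  eventual periodicity of \<open>d(x)\<close> gives polynomial identities that also hold at \<open>\<gamma>\<close>. The
  ``formal orbit'' at \<open>\<gamma>\<close> is then bounded, which yields
  \<open>x = \<Sum> d\<^sub>i(x) (-1/\<gamma>)\<^bsup>i+1\<^esup>\<close>. At points whose orbit avoids the discontinuities of \<open>T\<close>
  the digits are locally constant, so the identity extends to such a point \<open>y\<close> and to \<open>T y\<close>;
  comparing the two forces \<open>\<gamma> = \<beta>\<close>. The same periodicity for \<open>x = 1/b\<close> yields a monic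
  integer polynomial vanishing at \<open>\<beta>\<close>.\<close>

lemma map_poly_of_int_add:
  "map_poly (of_int :: int \<Rightarrow> 'a::comm_ring_1) (p + q) = map_poly of_int p + map_poly of_int q"
  by (intro poly_eqI) (simp add: coeff_map_poly)

lemma map_poly_of_int_diff:
  "map_poly (of_int :: int \<Rightarrow> 'a::comm_ring_1) (p - q) = map_poly of_int p - map_poly of_int q"
  by (intro poly_eqI) (simp add: coeff_map_poly)

lemma map_poly_of_int_uminus:
  "map_poly (of_int :: int \<Rightarrow> 'a::comm_ring_1) (- p) = - map_poly of_int p"
  by (intro poly_eqI) (simp add: coeff_map_poly)

lemma map_poly_of_int_mult:
  "map_poly (of_int :: int \<Rightarrow> 'a::comm_ring_1) (p * q) = map_poly of_int p * map_poly of_int q"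
  by (intro poly_eqI) (simp add: coeff_map_poly coeff_mult)

lemma map_poly_of_int_smult:
  "map_poly (of_int :: int \<Rightarrow> 'a::comm_ring_1) (smult c p) = smult (of_int c) (map_poly of_int p)"
  by (intro poly_eqI) (simp add: coeff_map_poly)

lemmas map_poly_of_int_simps =
  map_poly_of_int_add map_poly_of_int_diff map_poly_of_int_uminus map_poly_of_int_mult
  map_poly_of_int_smult map_poly_pCons map_poly_monom

text \<open>Pseudo-dividing \<open>p\<close> by a polynomial of smaller degree sharing the root, primality of
  \<open>p\<close> forces that polynomial to be a constant.\<close>

lemma irreducible_root_degree_le:
  fixes p g :: "int poly" and z :: complex
  assumes "lead_coeff p = 1" "irreducible p" "poly (map_poly of_int p) z = 0"
    and "g \<noteq> 0" "poly (map_poly of_int g) z = 0"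
  shows "degree p \<le> degree g"
  using assms(4,5)
proof (induction "degree g" arbitrary: g rule: less_induct)
  case less
  show ?case
  proof (rule ccontr)
    assume deg: "\<not> degree p \<le> degree g"
    obtain q r where qr: "pseudo_divmod p g = (q, r)" by fastforce
    define c where "c = lead_coeff g ^ (Suc (degree p) - degree g)"
    have "c \<noteq> 0" using less.prems(1) by (simp add: c_def)
    have div: "smult c p = g * q + r" using pseudo_divmod(1)[OF less.prems(1) qr] by (simp add: c_def)
    have "poly (map_poly of_int r) z = 0"
      using arg_cong[OF div, of "\<lambda>s. poly (map_poly of_int s) z"] assms(3) less.prems(2)
      by (simp add: map_poly_of_int_simps)
    with less.hyps deg pseudo_divmod(2)[OF less.prems(1) qr] have "r = 0" by force
    have "p dvd g * q" using div \<open>r = 0\<close> by (metis add.right_neutral dvd_smult dvd_refl)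
    hence "p dvd g \<or> p dvd q"
      using irreducible_imp_prime_poly[OF assms(2)] by (simp add: prime_elem_dvd_mult_iff)
    thus False
    proof
      assume "p dvd g"
      with deg less.prems(1) show False by (simp add: dvd_imp_degree_le)
    next
      assume "p dvd q"
      then obtain s where "q = p * s" by (auto elim: dvdE)
      have "p \<noteq> 0" using assms(1) by auto
      have "[:c:] * p = (g * s) * p" using div \<open>r = 0\<close> \<open>q = p * s\<close> by (simp add: ac_simps)
      hence "[:c:] = g * s" using \<open>p \<noteq> 0\<close> mult_cancel_right by metis
      moreover have "s \<noteq> 0" using \<open>[:c:] = g * s\<close> \<open>c \<noteq> 0\<close> by auto
      moreover have "degree (g * s) = 0" by (metis \<open>[:c:] = g * s\<close> degree_pCons_0)
      ultimately have "degree g = 0" using less.prems(1) degree_mult_eq[of g s] by simp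
      then obtain g0 where "g = [:g0:]" by (metis degree_eq_zeroE)
      with less.prems show False by (simp add: map_poly_pCons)
    qed
  qed
qed

lemma irreducible_root_dvd:
  fixes p g :: "int poly" and z :: complex
  assumes "lead_coeff p = 1" "irreducible p" "poly (map_poly of_int p) z = 0"
    and "poly (map_poly of_int g) z = 0"
  shows "p dvd g"
proof -
  have "p \<noteq> 0" using assms(1) by auto
  obtain q r where qr: "pseudo_divmod g p = (q, r)" by fastforce
  have div: "g = p * q + r" using pseudo_divmod(1)[OF \<open>p \<noteq> 0\<close> qr] assms(1) by simp
  have "poly (map_poly of_int r) z = 0"
    using arg_cong[OF div, of "\<lambda>s. poly (map_poly of_int s) z"] assms(3,4)
    by (simp add: map_poly_of_int_simps)
  hence "r = 0"
    using irreducible_root_degree_le[OF assms(1-3)] pseudo_divmod(2)[OF \<open>p \<noteq> 0\<close> qr]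
    by (meson not_le)
  thus ?thesis using div by simp
qed

primrec digit_poly :: "(nat \<Rightarrow> int) \<Rightarrow> nat \<Rightarrow> int poly" where
  "digit_poly ds 0 = 0"
| "digit_poly ds (Suc n) = pCons (ds n) (- digit_poly ds n)"

text \<open>For the digits of \<open>x\<close> and \<open>t = \<beta>\<close> it is the \<open>T\<close>-orbit of \<open>x\<close>; the argument of the paper
  replaces \<open>\<beta>\<close> by a conjugate.\<close>

primrec formal_orbit :: "(nat \<Rightarrow> int) \<Rightarrow> real \<Rightarrow> nat \<Rightarrow> 'a::real_field \<Rightarrow> 'a" where
  "formal_orbit ds x 0 t = of_real x"
| "formal_orbit ds x (Suc n) t = - t * formal_orbit ds x n t - of_int (ds n)"

lemma formal_orbit_altdef:
  "formal_orbit ds x n t = (- t) ^ n * of_real x - poly (map_poly of_int (digit_poly ds n)) t"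
proof (induction n)
  case (Suc n)
  show ?case by (simp add: Suc.IH map_poly_of_int_simps algebra_simps)
qed simp

lemma coeff_digit_poly_eq_0: "n \<le> j \<Longrightarrow> coeff (digit_poly ds n) j = 0"
proof (induction n arbitrary: j)
  case (Suc n)
  then obtain j' where "j = Suc j'" "n \<le> j'" by (cases j) auto
  thus ?case using Suc.IH by (simp add: coeff_pCons)
qed simp

definition orbit_poly :: "int \<Rightarrow> int \<Rightarrow> (nat \<Rightarrow> int) \<Rightarrow> nat \<Rightarrow> int poly" where
  "orbit_poly a b ds n = smult a (monom ((-1) ^ n) n) - smult b (digit_poly ds n)"

lemma poly_orbit_poly:
  assumes "(of_real x :: 'a::real_field) = of_int a / of_int b" "b \<noteq> 0"
  shows "poly (map_poly of_int (orbit_poly a b ds n)) (t :: 'a) = of_int b * formal_orbit ds x n t"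
proof -
  have "of_int b * ((- t) ^ n * of_real x) = of_int a * ((-1) ^ n * t ^ n)"
    using assms by (simp add: power_minus[of t])
  thus ?thesis
    by (simp add: orbit_poly_def formal_orbit_altdef map_poly_of_int_simps poly_monom algebra_simps)
qed

lemma lead_coeff_orbit_poly_diff:
  assumes "q > 0"
  shows "lead_coeff (smult ((-1) ^ (n + q)) (orbit_poly 1 b ds (n + q) - orbit_poly 1 b ds n)) = 1"
    (is "lead_coeff ?P = 1")
proof -
  have top: "coeff ?P (n + q) = 1" using assms by (simp add: orbit_poly_def coeff_digit_poly_eq_0)
  have "degree ?P = n + q"
  proof (rule antisym)
    show "degree ?P \<le> n + q" by (rule degree_le) (simp add: orbit_poly_def coeff_digit_poly_eq_0)
    show "n + q \<le> degree ?P" by (metis le_degree top zero_neq_one)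
  qed
  thus ?thesis using top by simp
qed

text \<open>Rationality of \<open>x\<close> makes coincidences in the formal orbit polynomial identities over \<int>,
  which therefore pass from one root of the minimal polynomial to the others.\<close>

lemma formal_orbit_conjugate_eq:
  fixes p :: "int poly" and z \<gamma> :: complex
  assumes "lead_coeff p = 1" "irreducible p" "poly (map_poly of_int p) z = 0"
    and "poly (map_poly of_int p) \<gamma> = 0" and "x \<in> \<rat>"
    and "formal_orbit ds x m z = formal_orbit ds x n z"
  shows "formal_orbit ds x m \<gamma> = formal_orbit ds x n \<gamma>"
proof -
  obtain a b where "b > 0" "x = of_int a / of_int b" using Rats_cases'[OF assms(5)] by blast
  hence x: "(of_real x :: complex) = of_int a / of_int b" "b \<noteq> 0" by simp_all
  define R where "R = orbit_poly a b ds m - orbit_poly a b ds n"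
  have "poly (map_poly of_int R) z = 0"
    using assms(6) by (simp add: R_def map_poly_of_int_diff poly_orbit_poly[OF x])
  then obtain s where "R = p * s" using irreducible_root_dvd[OF assms(1-3)] by (auto elim: dvdE)
  hence "poly (map_poly of_int R) \<gamma> = 0" using assms(4) by (simp add: map_poly_of_int_mult)
  hence "of_int b * (formal_orbit ds x m \<gamma> - formal_orbit ds x n \<gamma>) = 0"
    by (simp add: R_def map_poly_of_int_diff poly_orbit_poly[OF x] algebra_simps)
  thus ?thesis using x(2) by simp
qed

lemma formal_orbit_partial_sums:
  assumes "t \<noteq> 0"
  shows "(\<Sum>i<n. of_int (ds i) * (- inverse t) ^ Suc i)
           = of_real x - (- inverse t) ^ n * formal_orbit ds x n t"
proof (induction n)
  case (Suc n)
  have "(- inverse t) ^ Suc n * formal_orbit ds x (Suc n) t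
        = (- inverse t) ^ n * ((- inverse t) * (- t)) * formal_orbit ds x n t
          - of_int (ds n) * (- inverse t) ^ Suc n"
    by (simp add: algebra_simps)
  also have "(- inverse t) * (- t) = 1" using assms by simp
  finally show ?case using Suc.IH by simp
qed simp

lemma formal_orbit_bounded_sums:
  fixes t :: complex
  assumes "norm t > 1" and "bounded (range (\<lambda>n. formal_orbit ds x n t))"
  shows "(\<lambda>i. of_int (ds i) * (- inverse t) ^ Suc i) sums of_real x"
proof -
  define w where "w = - inverse t"
  have "norm w < 1" using assms(1) by (simp add: w_def norm_inverse inverse_less_1_iff)
  obtain B where B: "\<And>n. norm (formal_orbit ds x n t) \<le> B"
    using assms(2) by (auto simp: bounded_iff)
  have "(\<lambda>n. w ^ n * formal_orbit ds x n t) \<longlonglongrightarrow> 0"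
  proof (rule Lim_null_comparison)
    show "\<forall>\<^sub>F n in sequentially. norm (w ^ n * formal_orbit ds x n t) \<le> norm w ^ n * B"
      using B by (intro always_eventually allI) (simp add: norm_mult norm_power mult_left_mono)
    show "(\<lambda>n. norm w ^ n * B) \<longlonglongrightarrow> 0"
      using \<open>norm w < 1\<close> by (intro tendsto_mult_left_zero LIMSEQ_power_zero) auto
  qed
  hence "(\<lambda>n. of_real x - w ^ n * formal_orbit ds x n t) \<longlonglongrightarrow> of_real x"
    by (auto intro: tendsto_eq_intros)
  moreover have "(\<Sum>i<n. of_int (ds i) * w ^ Suc i) = of_real x - w ^ n * formal_orbit ds x n t" for n
    unfolding w_def using assms(1) by (intro formal_orbit_partial_sums) auto
  ultimately show ?thesis unfolding sums_def w_def[symmetric] by simp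
qed

lemma eventually_periodic_finite_range:
  assumes "eventually_periodic f"
  shows "finite (range f)"
proof -
  obtain N p where p: "p > 0" "\<forall>n\<ge>N. f (n + p) = f n"
    using assms unfolding eventually_periodic_def by blast
  have "f n \<in> f ` {..<N + p}" for n
  proof (induction n rule: less_induct)
    case (less n)
    show ?case
    proof (cases "n < N + p")
      case False
      hence "f n = f (n - p)" using p(2)[rule_format, of "n - p"] by simp
      moreover have "n - p < n" using False p(1) by simp
      ultimately show ?thesis using less.IH by simp
    qed simp
  qed
  hence "range f \<subseteq> f ` {..<N + p}" by blast
  thus ?thesis using finite_subset by blast
qed

lemma summable_bounded_coeffs_power:
  fixes a :: "nat \<Rightarrow> 'a::{real_normed_div_algebra,banach}"
  assumes "norm w < 1" "\<And>i. norm (a i) \<le> C"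
  shows "summable (\<lambda>i. a i * w ^ Suc i)"
proof (rule summable_comparison_test')
  show "summable (\<lambda>i. C * norm w * norm w ^ i)"
    using assms(1) by (intro summable_mult summable_geometric) simp
  show "norm (a i * w ^ Suc i) \<le> C * norm w * norm w ^ i" for i
    using mult_right_mono[OF assms(2), of "norm w * norm w ^ i" i]
    by (simp add: norm_mult norm_power mult.assoc)
qed

lemma norm_diff_suminf_bounded_coeffs_le:
  fixes a b :: "nat \<Rightarrow> 'a::{real_normed_div_algebra,banach}"
  assumes w: "norm w < 1" and a: "\<And>i. norm (a i) \<le> C" and b: "\<And>i. norm (b i) \<le> C"
    and agree: "\<And>i. i < k \<Longrightarrow> a i = b i"
  shows "norm ((\<Sum>i. a i * w ^ Suc i) - (\<Sum>i. b i * w ^ Suc i)) \<le> 2 * C * norm w ^ k / (1 - norm w)"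
proof -
  define c where "c i = (a i - b i) * w ^ Suc i" for i
  have "c sums ((\<Sum>i. a i * w ^ Suc i) - (\<Sum>i. b i * w ^ Suc i))"
    unfolding c_def left_diff_distrib
    by (intro sums_diff summable_sums summable_bounded_coeffs_power[OF w a]
        summable_bounded_coeffs_power[OF w b])
  moreover have "(\<Sum>i<k. c i) = 0" by (intro sum.neutral) (simp add: c_def agree)
  ultimately have tail: "(\<lambda>i. c (i + k)) sums ((\<Sum>i. a i * w ^ Suc i) - (\<Sum>i. b i * w ^ Suc i))"
    using sums_split_initial_segment[of c _ k] by simp
  have "0 \<le> C" using a[of 0] norm_ge_zero order.trans by blast
  have bound: "norm (c (i + k)) \<le> 2 * C * norm w ^ k * norm w ^ i" for i
  proof -
    have "norm (a (i + k) - b (i + k)) \<le> 2 * C"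
      using norm_triangle_ineq4[of "a (i + k)" "b (i + k)"] a[of "i + k"] b[of "i + k"] by simp
    moreover have "norm w ^ Suc (i + k) \<le> norm w ^ (i + k)"
      using w by (intro power_decreasing) auto
    ultimately have "norm (c (i + k)) \<le> 2 * C * norm w ^ (i + k)"
      unfolding c_def norm_mult norm_power using \<open>0 \<le> C\<close> by (intro mult_mono) auto
    thus ?thesis by (simp add: power_add mult_ac)
  qed
  have geom: "summable (\<lambda>i. 2 * C * norm w ^ k * norm w ^ i)"
    using w by (intro summable_mult summable_geometric) simp
  have "summable (\<lambda>i. norm (c (i + k)))"
    by (rule summable_comparison_test'[OF geom]) (simp add: bound)
  hence "norm (\<Sum>i. c (i + k)) \<le> (\<Sum>i. 2 * C * norm w ^ k * norm w ^ i)"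
    using bound geom by (intro order.trans[OF summable_norm] suminf_le)
  also have "\<dots> = 2 * C * norm w ^ k / (1 - norm w)"
    using w by (simp add: suminf_mult suminf_geometric divide_simps)
  finally show ?thesis using tail by (simp add: sums_iff)
qed

locale negbeta_expansion =
  fixes \<beta> l :: real
  assumes \<beta>_gt_1: "\<beta> > 1" and l_gt: "-1 < l" and l_le_0: "l \<le> 0"
begin

abbreviation T :: "real \<Rightarrow> real" where "T \<equiv> negbeta_T \<beta> l"
abbreviation dig :: "real \<Rightarrow> nat \<Rightarrow> int" where "dig \<equiv> negbeta_digits \<beta> l"

lemma negbeta_T_range: "l \<le> T y \<and> T y < l + 1"
  unfolding negbeta_T_def by linarith

lemma negbeta_T_iterate_range: "l \<le> y \<Longrightarrow> y < l + 1 \<Longrightarrow> l \<le> (T ^^ n) y \<and> (T ^^ n) y < l + 1"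
  by (cases n) (auto simp: negbeta_T_range)

lemma negbeta_T_iterate_Suc: "T ((T ^^ n) y) = - \<beta> * (T ^^ n) y - of_int (dig y n)"
  by (simp add: negbeta_T_def negbeta_digits_def)

lemma negbeta_digits_iterate: "dig ((T ^^ m) y) n = dig y (n + m)"
  by (simp add: negbeta_digits_def funpow_add)

lemma negbeta_digits_bound:
  assumes "l \<le> y" "y < l + 1"
  shows "\<bar>real_of_int (dig y n)\<bar> \<le> \<beta> + 2"
proof -
  define u where "u = (T ^^ n) y"
  have "\<bar>u\<bar> \<le> 1" using negbeta_T_iterate_range[OF assms, of n] l_gt l_le_0 unfolding u_def by linarith
  hence "\<bar>\<beta> * u\<bar> \<le> \<beta>" using \<beta>_gt_1 by (simp add: abs_mult mult_left_le)
  moreover have "real_of_int (dig y n) = of_int \<lfloor>- \<beta> * u - l\<rfloor>"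
    by (simp add: negbeta_digits_def u_def)
  ultimately show ?thesis using l_gt l_le_0 by linarith
qed

lemma negbeta_T_iterate_diff:
  "(\<And>i. i < n \<Longrightarrow> dig y i = dig y' i) \<Longrightarrow> (T ^^ n) y - (T ^^ n) y' = (- \<beta>) ^ n * (y - y')"
proof (induction n)
  case (Suc n)
  hence "dig y n = dig y' n" "(T ^^ n) y - (T ^^ n) y' = (- \<beta>) ^ n * (y - y')" by simp_all
  hence "(T ^^ Suc n) y - (T ^^ Suc n) y' = - \<beta> * ((T ^^ n) y - (T ^^ n) y')"
    by (simp add: negbeta_T_iterate_Suc algebra_simps)
  thus ?case using \<open>(T ^^ n) y - (T ^^ n) y' = (- \<beta>) ^ n * (y - y')\<close> by simp
qed simp

lemma negbeta_digits_inj: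
  assumes "l \<le> y" "y < l + 1" "l \<le> y'" "y' < l + 1" and "dig y = dig y'"
  shows "y = y'"
proof (rule ccontr)
  assume "y \<noteq> y'"
  then obtain n where n: "1 / \<bar>y - y'\<bar> < \<beta> ^ n" using real_arch_pow[OF \<beta>_gt_1] by blast
  have "\<bar>(T ^^ n) y - (T ^^ n) y'\<bar> = \<beta> ^ n * \<bar>y - y'\<bar>"
    using negbeta_T_iterate_diff[of n y y'] assms(5) \<beta>_gt_1 by (simp add: abs_mult power_abs)
  also have "\<dots> > 1" using n \<open>y \<noteq> y'\<close> by (simp add: field_simps)
  finally show False
    using negbeta_T_iterate_range[OF assms(1,2), of n] negbeta_T_iterate_range[OF assms(3,4), of n]
    by linarith
qed

lemma eventually_periodic_negbeta_orbit:
  assumes "l \<le> x" "x < l + 1" and "eventually_periodic (dig x)"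
  shows "eventually_periodic (\<lambda>n. (T ^^ n) x)"
proof -
  obtain N p where p: "p > 0" "\<forall>n\<ge>N. dig x (n + p) = dig x n"
    using assms(3) unfolding eventually_periodic_def by blast
  have "(T ^^ (n + p)) x = (T ^^ n) x" if "n \<ge> N" for n
  proof (rule negbeta_digits_inj)
    show "dig ((T ^^ (n + p)) x) = dig ((T ^^ n) x)"
      using p(2) that by (auto simp: negbeta_digits_iterate add.assoc[symmetric])
  qed (use negbeta_T_iterate_range[OF assms(1,2)] in blast)+
  thus ?thesis using p(1) unfolding eventually_periodic_def by blast
qed

lemma negbeta_orbit_eq_formal_orbit:
  "of_real ((T ^^ n) x) = formal_orbit (dig x) x n (of_real \<beta> :: 'a::real_field)"
  by (induction n) (simp_all add: negbeta_T_iterate_Suc)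

text \<open>Points whose orbit never reaches \<open>l\<close> never sit on a discontinuity of \<open>T\<close>, so around
  them every digit is locally constant. All but countably many points are of this kind.\<close>

lemma countable_negbeta_T_preimage:
  assumes "countable C"
  shows "countable {y. T y \<in> C}"
proof -
  have "{y. T y \<in> C} \<subseteq> (\<lambda>(u, k). - (u + of_int k) / \<beta>) ` (C \<times> (UNIV :: int set))"
  proof
    fix y assume "y \<in> {y. T y \<in> C}"
    moreover have "y = - (T y + of_int \<lfloor>- \<beta> * y - l\<rfloor>) / \<beta>"
      using \<beta>_gt_1 by (simp add: negbeta_T_def field_simps)
    ultimately show "y \<in> (\<lambda>(u, k). - (u + of_int k) / \<beta>) ` (C \<times> UNIV)"
      by (intro image_eqI[where x = "(T y, \<lfloor>- \<beta> * y - l\<rfloor>)"]) auto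
  qed
  thus ?thesis using assms by (auto intro: countable_subset)
qed

lemma countable_negbeta_T_iterate_preimage:
  "countable C \<Longrightarrow> countable {y. (T ^^ n) y \<in> C}"
proof (induction n arbitrary: C)
  case (Suc n)
  have "{y. (T ^^ Suc n) y \<in> C} = {y. T y \<in> {u. (T ^^ n) u \<in> C}}"
    by (simp add: funpow_Suc_right del: funpow.simps)
  thus ?case using countable_negbeta_T_preimage[OF Suc.IH[OF Suc.prems]] by simp
qed simp

lemma negbeta_generic_point_exists: "\<exists>y. 0 < y \<and> y < l + 1 \<and> (\<forall>n. (T ^^ Suc n) y \<noteq> l)"
proof -
  have "countable (\<Union>n. {y. (T ^^ Suc n) y \<in> {l}})"
    by (intro countable_UN countable_negbeta_T_iterate_preimage) auto
  moreover have "uncountable {0<..<l + 1}" using l_gt by (simp add: uncountable_open_interval)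
  ultimately have "\<not> {0<..<l + 1} \<subseteq> (\<Union>n. {y. (T ^^ Suc n) y \<in> {l}})"
    using countable_subset by blast
  thus ?thesis by auto
qed

lemma negbeta_digit_locally_constant:
  assumes generic: "\<forall>n. (T ^^ Suc n) y0 \<noteq> l" and "((T ^^ j) \<longlongrightarrow> (T ^^ j) y0) (at y0)"
  shows "\<forall>\<^sub>F y in at y0. dig y j = dig y0 j"
proof -
  define z0 where "z0 = - \<beta> * (T ^^ j) y0 - l"
  have lim: "((\<lambda>y. - \<beta> * (T ^^ j) y - l) \<longlongrightarrow> z0) (at y0)"
    unfolding z0_def using assms(2) by (intro tendsto_intros)
  have "(T ^^ Suc j) y0 = l + (z0 - of_int \<lfloor>z0\<rfloor>)"
    by (simp add: negbeta_T_iterate_Suc negbeta_digits_def z0_def)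
  hence "of_int \<lfloor>z0\<rfloor> < z0" using generic by (metis add.right_neutral of_int_floor_le order_less_le right_minus_eq)
  moreover have "z0 < of_int \<lfloor>z0\<rfloor> + 1" by linarith
  ultimately have "\<forall>\<^sub>F y in at y0. of_int \<lfloor>z0\<rfloor> < - \<beta> * (T ^^ j) y - l"
      "\<forall>\<^sub>F y in at y0. - \<beta> * (T ^^ j) y - l < of_int \<lfloor>z0\<rfloor> + 1"
    using order_tendstoD[OF lim] by blast+
  hence "\<forall>\<^sub>F y in at y0. \<lfloor>- \<beta> * (T ^^ j) y - l\<rfloor> = \<lfloor>z0\<rfloor>"
    by eventually_elim (auto intro!: floor_unique)
  thus ?thesis by (simp add: negbeta_digits_def z0_def)
qed

lemma negbeta_T_iterate_tendsto_at_generic: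
  assumes "\<forall>n. (T ^^ Suc n) y0 \<noteq> l"
  shows "((T ^^ j) \<longlongrightarrow> (T ^^ j) y0) (at y0)"
proof (induction j)
  case (Suc j)
  have step: "(T ^^ Suc j) y0 = - \<beta> * (T ^^ j) y0 - of_int (dig y0 j)"
    by (simp add: negbeta_T_iterate_Suc)
  have "((\<lambda>y. - \<beta> * (T ^^ j) y - of_int (dig y0 j)) \<longlongrightarrow> (T ^^ Suc j) y0) (at y0)"
    unfolding step using Suc.IH by (intro tendsto_intros)
  moreover have "\<forall>\<^sub>F y in at y0. - \<beta> * (T ^^ j) y - of_int (dig y0 j) = (T ^^ Suc j) y"
    using negbeta_digit_locally_constant[OF assms Suc.IH]
    by eventually_elim (simp add: negbeta_T_iterate_Suc)
  ultimately show ?case by (rule Lim_transform_eventually)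
qed simp

lemma negbeta_digits_locally_constant:
  assumes "\<forall>n. (T ^^ Suc n) y0 \<noteq> l"
  shows "\<forall>\<^sub>F y in at y0. \<forall>j<k. dig y j = dig y0 j"
proof -
  have "\<forall>\<^sub>F y in at y0. \<forall>j\<in>{..<k}. dig y j = dig y0 j"
    using assms by (intro eventually_ball_finite ballI negbeta_digit_locally_constant
        negbeta_T_iterate_tendsto_at_generic) auto
  thus ?thesis by (rule eventually_mono) simp
qed

abbreviation digit_series :: "complex \<Rightarrow> real \<Rightarrow> complex" where
  "digit_series w y \<equiv> \<Sum>i. of_int (dig y i) * w ^ Suc i"

lemma norm_negbeta_digit_le:
  "l \<le> y \<Longrightarrow> y < l + 1 \<Longrightarrow> norm (of_int (dig y i) :: complex) \<le> \<beta> + 2"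
  using negbeta_digits_bound by simp

lemma summable_digit_series:
  "l \<le> y \<Longrightarrow> y < l + 1 \<Longrightarrow> norm w < 1 \<Longrightarrow> summable (\<lambda>i. of_int (dig y i) * w ^ Suc i :: complex)"
  by (rule summable_bounded_coeffs_power[where C = "\<beta> + 2"]) (use negbeta_digits_bound in auto)

lemma digit_series_shift:
  assumes "l \<le> y" "y < l + 1" "norm w < 1"
  shows "digit_series w y = w * (of_int (dig y 0) + digit_series w (T y))"
proof -
  have "dig (T y) i = dig y (Suc i)" for i using negbeta_digits_iterate[of 1 y i] by simp
  hence "(\<Sum>i. of_int (dig y (Suc i)) * w ^ Suc (Suc i)) = w * digit_series w (T y)"
    using suminf_mult[OF summable_digit_series[OF _ _ assms(3)], of "T y" w] negbeta_T_range[of y]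
    by (simp add: mult_ac)
  thus ?thesis using suminf_split_head[OF summable_digit_series[OF assms]] by (simp add: algebra_simps)
qed

lemma digit_series_tendsto_at_generic:
  assumes w: "norm w < 1" and y0: "l \<le> y0" "y0 < l + 1" and generic: "\<forall>n. (T ^^ Suc n) y0 \<noteq> l"
  shows "(digit_series w \<longlongrightarrow> digit_series w y0) (at y0 within {l..<l + 1})"
proof (rule tendstoI)
  fix e :: real assume "e > 0"
  have "(\<lambda>k. 2 * (\<beta> + 2) * norm w ^ k / (1 - norm w)) \<longlonglongrightarrow> 2 * (\<beta> + 2) * 0 / (1 - norm w)"
    using w by (intro tendsto_intros LIMSEQ_power_zero) auto
  hence "\<forall>\<^sub>F k in sequentially. 2 * (\<beta> + 2) * norm w ^ k / (1 - norm w) < e"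
    using \<open>e > 0\<close> by (intro order_tendstoD(2)) auto
  then obtain k where k: "2 * (\<beta> + 2) * norm w ^ k / (1 - norm w) < e"
    by (auto simp: eventually_sequentially)
  have "\<forall>\<^sub>F y in at y0 within {l..<l + 1}. \<forall>j<k. dig y j = dig y0 j"
    using negbeta_digits_locally_constant[OF generic] by (rule filter_leD[OF at_le, rotated]) simp
  moreover have "\<forall>\<^sub>F y in at y0 within {l..<l + 1}. y \<in> {l..<l + 1}"
    by (simp add: eventually_at_filter)
  ultimately show "\<forall>\<^sub>F y in at y0 within {l..<l + 1}. dist (digit_series w y) (digit_series w y0) < e"
  proof eventually_elim
    case (elim y)
    hence "norm (digit_series w y - digit_series w y0) \<le> 2 * (\<beta> + 2) * norm w ^ k / (1 - norm w)"
      using y0 by (intro norm_diff_suminf_bounded_coeffs_le[OF w] norm_negbeta_digit_le) auto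
    thus ?case using k by (simp add: dist_norm)
  qed
qed

lemma digit_series_eq_at_generic:
  assumes rational: "\<And>x. x \<in> \<rat> \<Longrightarrow> l \<le> x \<Longrightarrow> x < l + 1 \<Longrightarrow> digit_series w x = of_real x"
    and w: "norm w < 1" and y0: "l \<le> y0" "y0 < l + 1" and generic: "\<forall>n. (T ^^ Suc n) y0 \<noteq> l"
  shows "digit_series w y0 = of_real y0"
proof -
  define R where "R = \<rat> \<inter> {y0<..<l + 1}"
  have "y0 islimpt R"
  proof (unfold islimpt_approachable_real, intro allI impI)
    fix e :: real assume "e > 0"
    then obtain x where "x \<in> \<rat>" "y0 < x" "x < min (y0 + e) (l + 1)"
      using Rats_dense_in_real[of y0 "min (y0 + e) (l + 1)"] y0 by auto
    thus "\<exists>x\<in>R. x \<noteq> y0 \<and> \<bar>x - y0\<bar> < e" unfolding R_def by (intro bexI[of _ x]) auto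
  qed
  hence "at y0 within R \<noteq> bot" using trivial_limit_within by blast
  moreover have "(digit_series w \<longlongrightarrow> digit_series w y0) (at y0 within R)"
    by (rule tendsto_within_subset[OF digit_series_tendsto_at_generic[OF w y0 generic]])
      (use y0 in \<open>auto simp: R_def\<close>)
  moreover have "(digit_series w \<longlongrightarrow> of_real y0) (at y0 within R)"
  proof (rule Lim_transform_eventually)
    show "((\<lambda>y. of_real y :: complex) \<longlongrightarrow> of_real y0) (at y0 within R)"
      by (rule tendsto_of_real[OF tendsto_ident_at])
    have "of_real y = digit_series w y" if "y \<in> R" for y
      using that y0 by (intro rational[symmetric]) (auto simp: R_def)
    thus "\<forall>\<^sub>F y in at y0 within R. of_real y = digit_series w y"
      unfolding eventually_at_filter by (intro always_eventually) blast
  qed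
  ultimately show ?thesis by (rule tendsto_unique)
qed

context
  assumes periodic: "\<forall>x \<in> \<rat>. l \<le> x \<and> x < l + 1 \<longrightarrow> eventually_periodic (dig x)"
begin

text \<open>For \<open>x = 1/b\<close>, \<open>(-1)\<^sup>n b T\<^sup>n x\<close> is a monic integer polynomial of degree \<open>n\<close>
  in \<open>\<beta>\<close>, so a coincidence \<open>T\<^bsup>N+q\<^esup> x = T\<^sup>N x\<close> makes \<open>\<beta>\<close> an algebraic integer.\<close>

lemma algebraic_int_negbeta: "algebraic_int \<beta>"
proof -
  obtain n :: nat where n: "inverse (real (Suc n)) < l + 1"
    using reals_Archimedean[of "l + 1"] l_gt by auto
  define x where "x = inverse (real (Suc n))"
  have x: "x \<in> \<rat>" "l \<le> x" "x < l + 1" using n l_le_0 by (auto simp: x_def order.trans[of l 0])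
  obtain N q where q: "q > 0" "(T ^^ (N + q)) x = (T ^^ N) x"
    using eventually_periodic_negbeta_orbit[OF x(2,3)] periodic x
    unfolding eventually_periodic_def by blast
  define P where "P = smult ((-1) ^ (N + q)) (orbit_poly 1 (int (Suc n)) (dig x) (N + q)
                                             - orbit_poly 1 (int (Suc n)) (dig x) N)"
  have "of_real x = (of_int 1 / of_int (int (Suc n)) :: real)" by (simp add: x_def divide_inverse)
  hence "poly (map_poly of_int P) \<beta> = 0"
    using q(2) negbeta_orbit_eq_formal_orbit[of _ x, where 'a = real]
    by (simp add: P_def map_poly_of_int_smult map_poly_of_int_diff poly_orbit_poly)
  moreover have "lead_coeff P = 1" using lead_coeff_orbit_poly_diff[OF q(1)] by (simp add: P_def)
  ultimately show ?thesis using algebraic_int_altdef_ipoly by blast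
qed

lemma digit_series_rational_at_conjugate:
  assumes z: "z \<in> conjugates \<beta>" "norm z > 1" and x: "x \<in> \<rat>" "l \<le> x" "x < l + 1"
  shows "digit_series (- inverse z) x = of_real x"
proof -
  obtain p where p: "lead_coeff p = 1" "irreducible p"
      "poly (map_poly of_int p) (complex_of_real \<beta>) = 0" "poly (map_poly of_int p) z = 0"
    using z(1) unfolding conjugates_def by blast
  obtain N q where q: "q > 0" "\<forall>n\<ge>N. (T ^^ (n + q)) x = (T ^^ n) x"
    using eventually_periodic_negbeta_orbit[OF x(2,3)] periodic x
    unfolding eventually_periodic_def by blast
  have "formal_orbit (dig x) x (n + q) z = formal_orbit (dig x) x n z" if "n \<ge> N" for n
  proof (rule formal_orbit_conjugate_eq[OF p x(1)])
    show "formal_orbit (dig x) x (n + q) (of_real \<beta>) = formal_orbit (dig x) x n (of_real \<beta>)"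
      using q(2) that by (simp flip: negbeta_orbit_eq_formal_orbit)
  qed
  hence "eventually_periodic (\<lambda>n. formal_orbit (dig x) x n z)"
    using q(1) unfolding eventually_periodic_def by blast
  hence "bounded (range (\<lambda>n. formal_orbit (dig x) x n z))"
    by (intro finite_imp_bounded eventually_periodic_finite_range)
  thus ?thesis using formal_orbit_bounded_sums[OF z(2)] by (simp add: sums_iff)
qed

lemma conjugate_norm_le_1:
  assumes z: "z \<in> conjugates \<beta>" "z \<noteq> of_real \<beta>"
  shows "norm z \<le> 1"
proof (rule ccontr)
  assume "\<not> norm z \<le> 1"
  define w where "w = - inverse z"
  have w: "norm w < 1" using \<open>\<not> norm z \<le> 1\<close> by (simp add: w_def norm_inverse inverse_less_1_iff)
  have rational: "digit_series w x = of_real x" if "x \<in> \<rat>" "l \<le> x" "x < l + 1" for x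
    unfolding w_def using z(1) \<open>\<not> norm z \<le> 1\<close> that by (intro digit_series_rational_at_conjugate) auto
  obtain y where y: "0 < y" "y < l + 1" and generic: "\<forall>n. (T ^^ Suc n) y \<noteq> l"
    using negbeta_generic_point_exists by blast
  have "l \<le> y" using y l_le_0 by linarith
  have generic': "\<forall>n. (T ^^ Suc n) (T y) \<noteq> l"
  proof
    fix n
    have "(T ^^ Suc n) (T y) = (T ^^ Suc (Suc n)) y" by (simp only: funpow_Suc_right o_apply)
    thus "(T ^^ Suc n) (T y) \<noteq> l" by (simp only: generic[rule_format] not_False_eq_True)
  qed
  have Ty: "T y = - \<beta> * y - of_int (dig y 0)" using negbeta_T_iterate_Suc[of 0 y] by simp
  have "of_real y = w * (of_int (dig y 0) + of_real (T y))"
    using digit_series_shift[OF \<open>l \<le> y\<close> y(2) w] negbeta_T_range[of y]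
      digit_series_eq_at_generic[OF rational w \<open>l \<le> y\<close> y(2) generic]
      digit_series_eq_at_generic[OF rational w _ _ generic'] by simp
  also have "\<dots> = of_real \<beta> * of_real y / z"
    by (simp add: w_def Ty field_simps)
  finally have "of_real y = of_real \<beta> * of_real y / z" .
  moreover have "z \<noteq> 0" using \<open>\<not> norm z \<le> 1\<close> by auto
  ultimately have "of_real y * z = of_real y * of_real \<beta>" by (simp add: field_simps)
  hence "z = of_real \<beta>" using y(1) by simp
  with z(2) show False ..
qed

end

end

theorem mainTheorem8:
  fixes \<beta> l :: real
  assumes "\<beta> > 1" and "-1 < l" and "l \<le> 0"
    and "\<forall>x \<in> \<rat>. l \<le> x \<and> x < l + 1 \<longrightarrow> eventually_periodic (negbeta_digits \<beta> l x)"
  shows "pisot \<beta> \<or> salem \<beta>"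
proof -
  interpret negbeta_expansion \<beta> l using assms(1-3) by unfold_locales
  have "algebraic_int \<beta>" using algebraic_int_negbeta[OF assms(4)] .
  have le_1: "cmod z \<le> 1" if "z \<in> conjugates \<beta> - {of_real \<beta>}" for z
    using conjugate_norm_le_1[OF assms(4)] that by blast
  show ?thesis
  proof (cases "\<exists>z \<in> conjugates \<beta> - {of_real \<beta>}. cmod z = 1")
    case True
    thus ?thesis using assms(1) \<open>algebraic_int \<beta>\<close> le_1 unfolding salem_def by blast
  next
    case False
    hence "\<forall>z \<in> conjugates \<beta> - {of_real \<beta>}. cmod z < 1" using le_1 by (auto simp: less_le)
    thus ?thesis using assms(1) \<open>algebraic_int \<beta>\<close> unfolding pisot_def by blast
  qed
qed

end
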